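(* Let $\mathsf{X}$ and $\mathsf{Y}$ be intermediate temporal logics with $\mathsf{X}\subseteq\mathsf{Y}$. A temporal theory $\Gamma$ is $\mathsf{X}$-consistent if and only if it is $\mathsf{Y}$-consistent.
   Context: Fix a countable set $\mathbb{P}$ of atoms. Temporal formulas: $\varphi ::= p\mid\bot\mid\varphi\wedge\varphi\mid\varphi\vee\varphi\mid\varphi\to\varphi\mid\circ\varphi\mid\varphi\,\mathsf{U}\,\varphi\mid\varphi\,\mathsf{R}\,\varphi$; $\Box\varphi:=\bot\,\mathsf{R}\,\varphi$. An intuitionistic temporal frame is $(W,\preccurlyeq,S)$ with $W\ne\emptyset$, $\preccurlyeq$ a partial order, $S:W\to W$ forward confluent ($w\preccurlyeq v\Rightarrow S(w)\preccurlyeq S(v)$); persistent if also backward confluent (if $S(w)=v\preccurlyeq u$ then some $t\succcurlyeq w$ has $S(t)=u$). A model adds $V:W\to2^{\mathbb{P}}$ monotone along $\preccurlyeq$. Satisfaction: atoms via $V$; $\bot$ never; $\wedge,\vee$ pointwise; $M,w\models\varphi\to\psi$ iff for all $v\succcurlyeq w$, $M,v\models\varphi$ implies $M,v\models\psi$; $\circ\varphi$ at $w$ iff $\varphi$ at $S(w)$; $\varphi\,\mathsf{U}\,\psi$: some $k\ge0$ with $\psi$ at $S^k(w)$ and $\varphi$ at $S^i(w)$ for all $0\le i<k$; $\varphi\,\mathsf{R}\,\psi$: for all $k\ge0$, $\psi$ at $S^k(w)$ or $\varphi$ at some $S^i(w)$, $0\le i<k$. Depth $\le n$: no chain of $n+1$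 pairwise distinct $\preccurlyeq$-related worlds. $\mathrm{ITL}^{\mathrm{BD}_n}$: formulas true at every world of every model on a persistent frame of depth $\le n$; $\mathrm{LTL}:=\mathrm{ITL}^{\mathrm{BD}_1}$. An intermediate temporal logic is a set $\mathsf{X}$ with $\mathrm{ITL}^{\mathrm{BD}_n}\subseteq\mathsf{X}\subseteq\mathrm{LTL}$ for some $n\ge1$, closed under modus ponens, necessitation ($\psi\in\mathsf{X}\Rightarrow\circ\psi,\Box\psi\in\mathsf{X}$) and uniform substitution. $\mathsf{X}$-models are models on persistent frames of depth $\le n$ validating every formula of $\mathsf{X}$. $\Gamma$ is $\mathsf{X}$-consistent if some $\mathsf{X}$-model satisfies all of $\Gamma$ at some world. *)

theory Defs
  imports Main
begin

datatype fm =
    Atom nat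
  | Bot
  | And fm fm
  | Or fm fm
  | Imp fm fm
  | Next fm
  | Until fm fm
  | Release fm fm

definition Box :: "fm \<Rightarrow> fm" where
  "Box \<phi> = Release Bot \<phi>"

fun subst :: "(nat \<Rightarrow> fm) \<Rightarrow> fm \<Rightarrow> fm" where
  "subst \<sigma> (Atom p) = \<sigma> p"
| "subst \<sigma> Bot = Bot"
| "subst \<sigma> (And a b) = And (subst \<sigma> a) (subst \<sigma> b)"
| "subst \<sigma> (Or a b) = Or (subst \<sigma> a) (subst \<sigma> b)"
| "subst \<sigma> (Imp a b) = Imp (subst \<sigma> a) (subst \<sigma> b)"
| "subst \<sigma> (Next a) = Next (subst \<sigma> a)"
| "subst \<sigma> (Until a b) = Until (subst \<sigma> a) (subst \<sigma> b)"
| "subst \<sigma> (Release a b) = Release (subst \<sigma> a) (subst \<sigma> b)"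

record 'w kmodel =
  wor :: "'w set"
  leq :: "'w \<Rightarrow> 'w \<Rightarrow> bool"
  suc :: "'w \<Rightarrow> 'w"
  val :: "'w \<Rightarrow> nat set"

definition frame :: "'w kmodel \<Rightarrow> bool" where
  "frame M \<longleftrightarrow> wor M \<noteq> {}
     \<and> (\<forall>w\<in>wor M. suc M w \<in> wor M)
     \<and> (\<forall>w\<in>wor M. leq M w w)
     \<and> (\<forall>u\<in>wor M. \<forall>v\<in>wor M. \<forall>w\<in>wor M. leq M u v \<and> leq M v w \<longrightarrow> leq M u w)
     \<and> (\<forall>u\<in>wor M. \<forall>v\<in>wor M. leq M u v \<and> leq M v u \<longrightarrow> u = v)
     \<and> (\<forall>w\<in>wor M. \<forall>v\<in>wor M. leq M w v \<longrightarrow> leq M (suc M w) (suc M v))"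

definition persistent :: "'w kmodel \<Rightarrow> bool" where
  "persistent M \<longleftrightarrow> frame M
     \<and> (\<forall>w\<in>wor M. \<forall>u\<in>wor M. leq M (suc M w) u \<longrightarrow>
          (\<exists>t\<in>wor M. leq M w t \<and> suc M t = u))"

definition model :: "'w kmodel \<Rightarrow> bool" where
  "model M \<longleftrightarrow> frame M
     \<and> (\<forall>w\<in>wor M. \<forall>v\<in>wor M. leq M w v \<longrightarrow> val M w \<subseteq> val M v)"

definition depth_le :: "'w kmodel \<Rightarrow> nat \<Rightarrow> bool" where
  "depth_le M n \<longleftrightarrow> \<not> (\<exists>C. C \<subseteq> wor M \<and> finite C \<and> card C = Suc n
        \<and> (\<forall>x\<in>C. \<forall>y\<in>C. leq M x y \<or> leq M y x))"

fun sat :: "'w kmodel \<Rightarrow> 'w \<Rightarrow> fm \<Rightarrow> bool" where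
  "sat M w (Atom p) = (p \<in> val M w)"
| "sat M w Bot = False"
| "sat M w (And a b) = (sat M w a \<and> sat M w b)"
| "sat M w (Or a b) = (sat M w a \<or> sat M w b)"
| "sat M w (Imp a b) = (\<forall>v\<in>wor M. leq M w v \<longrightarrow> sat M v a \<longrightarrow> sat M v b)"
| "sat M w (Next a) = sat M (suc M w) a"
| "sat M w (Until a b) =
     (\<exists>k. sat M ((suc M ^^ k) w) b \<and> (\<forall>i<k. sat M ((suc M ^^ i) w) a))"
| "sat M w (Release a b) =
     (\<forall>k. sat M ((suc M ^^ k) w) b \<or> (\<exists>i<k. sat M ((suc M ^^ i) w) a))"

definition ITL_BD :: "'w itself \<Rightarrow> nat \<Rightarrow> fm set" where
  "ITL_BD T n = {\<phi>. \<forall>M :: 'w kmodel. model M \<and> persistent M \<and> depth_le M n \<longrightarrow>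
                      (\<forall>w\<in>wor M. sat M w \<phi>)}"

definition LTL :: "'w itself \<Rightarrow> fm set" where
  "LTL T = ITL_BD T 1"

definition intermediate_logic :: "'w itself \<Rightarrow> fm set \<Rightarrow> bool" where
  "intermediate_logic T X \<longleftrightarrow>
     (\<exists>n\<ge>1. ITL_BD T n \<subseteq> X) \<and> X \<subseteq> LTL T
     \<and> (\<forall>\<phi> \<psi>. Imp \<phi> \<psi> \<in> X \<longrightarrow> \<phi> \<in> X \<longrightarrow> \<psi> \<in> X)
     \<and> (\<forall>\<psi>\<in>X. Next \<psi> \<in> X \<and> Box \<psi> \<in> X)
     \<and> (\<forall>\<psi>\<in>X. \<forall>\<sigma>. subst \<sigma> \<psi> \<in> X)"

definition depth_of :: "'w itself \<Rightarrow> fm set \<Rightarrow> nat" where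
  "depth_of T X = (LEAST n. n \<ge> 1 \<and> ITL_BD T n \<subseteq> X)"

definition X_model :: "'w itself \<Rightarrow> fm set \<Rightarrow> 'w kmodel \<Rightarrow> bool" where
  "X_model T X M \<longleftrightarrow> model M \<and> persistent M \<and> depth_le M (depth_of T X)
     \<and> (\<forall>\<phi>\<in>X. \<forall>w\<in>wor M. sat M w \<phi>)"

definition consistent :: "'w itself \<Rightarrow> fm set \<Rightarrow> fm set \<Rightarrow> bool" where
  "consistent T X \<Gamma> \<longleftrightarrow>
     (\<exists>M :: 'w kmodel. \<exists>w\<in>wor M. X_model T X M \<and> (\<forall>\<phi>\<in>\<Gamma>. sat M w \<phi>))"

end

theory Submission
  imports Defs
begin

text \<open>A theory that holds at a world w of an X-model also holds at any maximal world above w,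
  by monotonicity of satisfaction. In a persistent frame the maximal worlds are closed under
  the successor map (backward confluence), so they generate a submodel of depth one that
  agrees with the original model on all formulas. Conversely a depth-one persistent model
  validates LTL, hence every intermediate logic.\<close>

lemma
  assumes "frame M"
  shows frame_suc_in_wor: "w \<in> wor M \<Longrightarrow> suc M w \<in> wor M"
    and frame_leq_refl: "w \<in> wor M \<Longrightarrow> leq M w w"
    and frame_leq_trans:
      "\<lbrakk>u \<in> wor M; v \<in> wor M; w \<in> wor M; leq M u v; leq M v w\<rbrakk> \<Longrightarrow> leq M u w"
    and frame_leq_antisym: "\<lbrakk>u \<in> wor M; v \<in> wor M; leq M u v; leq M v u\<rbrakk> \<Longrightarrow> u = v"
    and frame_suc_mono: "\<lbrakk>u \<in> wor M; v \<in> wor M; leq M u v\<rbrakk> \<Longrightarrow> leq M (suc M u) (suc M v)"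
  using assms unfolding frame_def by blast+

lemma frame_suc_pow_in_wor:
  assumes "frame M" "w \<in> wor M"
  shows "(suc M ^^ k) w \<in> wor M"
  by (induction k) (simp_all add: assms frame_suc_in_wor)

lemma frame_suc_pow_mono:
  assumes "frame M" "u \<in> wor M" "v \<in> wor M" "leq M u v"
  shows "leq M ((suc M ^^ k) u) ((suc M ^^ k) v)"
  by (induction k) (simp_all add: assms frame_suc_mono frame_suc_pow_in_wor)

lemma sat_mono:
  assumes "model M" "w \<in> wor M" "v \<in> wor M" "leq M w v" "sat M w \<phi>"
  shows "sat M v \<phi>"
  using assms(2-)
proof (induction \<phi> arbitrary: w v)
  case (Atom p)
  then show ?case using assms(1) by (auto simp: model_def)
next
  case (Imp a b)
  have "frame M" using assms(1) by (simp add: model_def)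
  then show ?case using Imp.prems by (auto dest: frame_leq_trans)
next
  case (Next a)
  have "frame M" using assms(1) by (simp add: model_def)
  then show ?case
    using Next by (simp add: Next.IH[OF frame_suc_in_wor frame_suc_in_wor frame_suc_mono])
next
  case (Until a b)
  have "frame M" using assms(1) by (simp add: model_def)
  note iterates = frame_suc_pow_in_wor[OF this] frame_suc_pow_mono[OF this]
  from Until.prems show ?case
    using Until.IH[OF iterates(1)[OF Until.prems(1)] iterates(1)[OF Until.prems(2)]
        iterates(2)[OF Until.prems(1-3)]] by auto
next
  case (Release a b)
  have "frame M" using assms(1) by (simp add: model_def)
  note iterates = frame_suc_pow_in_wor[OF this] frame_suc_pow_mono[OF this]
  from Release.prems show ?case
    using Release.IH[OF iterates(1)[OF Release.prems(1)] iterates(1)[OF Release.prems(2)]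
        iterates(2)[OF Release.prems(1-3)]] by (meson sat.simps(8))
qed (auto)

definition upward_suc_closed :: "'w kmodel \<Rightarrow> 'w set \<Rightarrow> bool" where
  "upward_suc_closed M W \<longleftrightarrow> W \<subseteq> wor M
     \<and> (\<forall>v\<in>W. \<forall>u\<in>wor M. leq M v u \<longrightarrow> u \<in> W) \<and> (\<forall>v\<in>W. suc M v \<in> W)"

lemma sat_restrict_upward_suc_closed:
  assumes "upward_suc_closed M W" "w \<in> W"
  shows "sat (M\<lparr>wor := W\<rparr>) w \<phi> = sat M w \<phi>"
  using assms(2)
proof (induction \<phi> arbitrary: w)
  case (Imp a b)
  have "\<forall>v\<in>wor M. leq M w v \<longrightarrow> v \<in> W"
    using assms(1) Imp.prems by (simp add: upward_suc_closed_def)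
  moreover have "W \<subseteq> wor M" using assms(1) by (simp add: upward_suc_closed_def)
  ultimately show ?case using Imp.IH by (simp add: subset_iff) blast
next
  case (Next a)
  then show ?case using assms(1) by (simp add: upward_suc_closed_def)
next
  case (Until a b)
  have "(suc M ^^ k) w \<in> W" for k
    using Until.prems assms(1) by (induction k) (auto simp: upward_suc_closed_def)
  then show ?case using Until.IH by simp
next
  case (Release a b)
  have "(suc M ^^ k) w \<in> W" for k
    using Release.prems assms(1) by (induction k) (auto simp: upward_suc_closed_def)
  then show ?case using Release.IH by simp
qed (auto)

lemma frame_restrict:
  assumes "frame M" "W \<subseteq> wor M" "W \<noteq> {}" "\<forall>v\<in>W. suc M v \<in> W"
  shows "frame (M\<lparr>wor := W\<rparr>)"
  unfolding frame_def
proof (simp, intro conjI ballI impI)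
  fix u v w assume "u \<in> W" "v \<in> W" "w \<in> W"
  with assms(2) have "u \<in> wor M" "v \<in> wor M" "w \<in> wor M" by auto
  note frame_leq_refl[OF assms(1) this(1)] frame_leq_trans[OF assms(1) this]
    frame_leq_antisym[OF assms(1) this(1,2)] frame_suc_mono[OF assms(1) this(1,2)]
  then show "leq M u u" "leq M u v \<and> leq M v w \<Longrightarrow> leq M u w"
    "leq M u v \<and> leq M v u \<Longrightarrow> u = v" "leq M u v \<Longrightarrow> leq M (suc M u) (suc M v)"
    by auto
qed (use assms(3,4) in auto)

lemma model_restrict:
  assumes "model M" "W \<subseteq> wor M" "W \<noteq> {}" "\<forall>v\<in>W. suc M v \<in> W"
  shows "model (M\<lparr>wor := W\<rparr>)"
proof -
  have "\<forall>w\<in>W. \<forall>v\<in>W. leq M w v \<longrightarrow> val M w \<subseteq> val M v"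
    using assms(1,2) unfolding model_def by blast
  then show ?thesis using assms frame_restrict[of M W] by (simp add: model_def)
qed

lemma persistent_restrict:
  assumes "persistent M" "upward_suc_closed M W" "W \<noteq> {}"
  shows "persistent (M\<lparr>wor := W\<rparr>)"
proof -
  have "frame (M\<lparr>wor := W\<rparr>)"
    using assms frame_restrict unfolding persistent_def upward_suc_closed_def by blast
  moreover have "\<exists>t\<in>W. leq M w t \<and> suc M t = u"
    if "w \<in> W" "u \<in> W" "leq M (suc M w) u" for w u
  proof -
    have "W \<subseteq> wor M" using assms(2) by (simp add: upward_suc_closed_def)
    with that obtain t where "t \<in> wor M" "leq M w t" "suc M t = u"
      using assms(1) unfolding persistent_def by blast
    moreover have "t \<in> W"
      using assms(2) \<open>w \<in> W\<close> calculation unfolding upward_suc_closed_def by blast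
    ultimately show ?thesis by blast
  qed
  ultimately show ?thesis by (simp add: persistent_def)
qed

lemma depth_le_mono:
  assumes "depth_le M m" "m \<le> n"
  shows "depth_le M n"
  unfolding depth_le_def
proof
  assume "\<exists>C. C \<subseteq> wor M \<and> finite C \<and> card C = Suc n \<and> (\<forall>x\<in>C. \<forall>y\<in>C. leq M x y \<or> leq M y x)"
  then obtain C where C: "C \<subseteq> wor M" "card C = Suc n" "\<forall>x\<in>C. \<forall>y\<in>C. leq M x y \<or> leq M y x"
    by blast
  obtain D where "D \<subseteq> C" "card D = Suc m" "finite D"
    using obtain_subset_with_card_n[of "Suc m" C] C(2) assms(2) by auto
  with C have "D \<subseteq> wor M \<and> finite D \<and> card D = Suc m \<and> (\<forall>x\<in>D. \<forall>y\<in>D. leq M x y \<or> leq M y x)"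
    by blast
  then show False using assms(1) unfolding depth_le_def by blast
qed

lemma depth_le_no_ascending_chain:
  assumes "frame M" "depth_le M n"
    and f: "\<And>k. f k \<in> wor M \<and> leq M (f k) (f (Suc k)) \<and> f (Suc k) \<noteq> f k"
  shows False
proof -
  have ascending: "leq M (f i) (f j)" if "i \<le> j" for i j
    using that
  proof (induction j rule: dec_induct)
    case base
    show ?case using f frame_leq_refl[OF assms(1)] by blast
  next
    case (step j)
    then show ?case
      using f[of i] f[of j] f[of "Suc j"] frame_leq_trans[OF assms(1), of "f i" "f j" "f (Suc j)"]
      by blast
  qed
  have "inj f"
  proof (rule linorder_injI)
    fix i j :: nat assume "i < j"
    then have "leq M (f (Suc i)) (f j)" by (simp add: ascending)
    show "f i \<noteq> f j"
    proof
      assume "f i = f j"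
      with \<open>leq M (f (Suc i)) (f j)\<close> have "leq M (f (Suc i)) (f i)" by simp
      then show False using f[of i] f[of "Suc i"] frame_leq_antisym[OF assms(1)] by blast
    qed
  qed
  then have "card (f ` {..n}) = Suc n" by (simp add: card_image inj_on_subset)
  moreover have "\<forall>x\<in>f ` {..n}. \<forall>y\<in>f ` {..n}. leq M x y \<or> leq M y x"
    by (metis ascending imageE nat_le_linear)
  moreover have "f ` {..n} \<subseteq> wor M" using f by blast
  ultimately show False using assms(2) unfolding depth_le_def by blast
qed

definition maximal_worlds :: "'w kmodel \<Rightarrow> 'w set" where
  "maximal_worlds M = {v \<in> wor M. \<forall>u\<in>wor M. leq M v u \<longrightarrow> u = v}"

lemma depth_le_ex_maximal_above:
  assumes "frame M" "depth_le M n" "w \<in> wor M"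
  shows "\<exists>v\<in>maximal_worlds M. leq M w v"
proof (rule ccontr)
  assume no_maximal: "\<not> ?thesis"
  have step: "\<exists>u. (u \<in> wor M \<and> leq M w u) \<and> leq M v u \<and> u \<noteq> v"
    if v: "v \<in> wor M \<and> leq M w v" for v
  proof -
    from v no_maximal obtain u where "u \<in> wor M" "leq M v u" "u \<noteq> v"
      unfolding maximal_worlds_def by blast
    moreover from this have "leq M w u"
      using v assms(3) frame_leq_trans[OF assms(1), of w v u] by blast
    ultimately show ?thesis by blast
  qed
  have "\<exists>v. v \<in> wor M \<and> leq M w v" using assms(3) frame_leq_refl[OF assms(1)] by blast
  from dependent_nat_choice[where P = "\<lambda>_ v. v \<in> wor M \<and> leq M w v"
      and Q = "\<lambda>_ v u. leq M v u \<and> u \<noteq> v", OF this step]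
  obtain f where "\<forall>k. (f k \<in> wor M \<and> leq M w (f k)) \<and> leq M (f k) (f (Suc k)) \<and> f (Suc k) \<noteq> f k"
    by blast
  then show False using depth_le_no_ascending_chain[OF assms(1,2), of f] by blast
qed

lemma maximal_worlds_upward_suc_closed:
  assumes "persistent M"
  shows "upward_suc_closed M (maximal_worlds M)"
  unfolding upward_suc_closed_def
proof (intro conjI ballI impI)
  show "maximal_worlds M \<subseteq> wor M" by (auto simp: maximal_worlds_def)
next
  fix v u assume "v \<in> maximal_worlds M" "u \<in> wor M" "leq M v u"
  then show "u \<in> maximal_worlds M" unfolding maximal_worlds_def by auto
next
  fix v assume "v \<in> maximal_worlds M"
  then have v: "v \<in> wor M" "\<And>u. u \<in> wor M \<Longrightarrow> leq M v u \<Longrightarrow> u = v"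
    by (simp_all add: maximal_worlds_def)
  have "frame M" using assms by (simp add: persistent_def)
  have backward: "\<exists>t\<in>wor M. leq M v t \<and> suc M t = u" if "u \<in> wor M" "leq M (suc M v) u" for u
    using assms v(1) that unfolding persistent_def by blast
  have "u = suc M v" if "u \<in> wor M" "leq M (suc M v) u" for u
    using backward[OF that] v(2) by blast
  with frame_suc_in_wor[OF \<open>frame M\<close> v(1)] show "suc M v \<in> maximal_worlds M"
    by (simp add: maximal_worlds_def)
qed

lemma depth_le_one_maximal_worlds: "depth_le (M\<lparr>wor := maximal_worlds M\<rparr>) 1"
  unfolding depth_le_def
proof
  assume "\<exists>C. C \<subseteq> wor (M\<lparr>wor := maximal_worlds M\<rparr>) \<and> finite C \<and> card C = Suc 1
    \<and> (\<forall>x\<in>C. \<forall>y\<in>C. leq (M\<lparr>wor := maximal_worlds M\<rparr>) x y \<or> leq (M\<lparr>wor := maximal_worlds M\<rparr>) y x)"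
  then obtain C where C: "C \<subseteq> maximal_worlds M" "card C = 2" "\<forall>x\<in>C. \<forall>y\<in>C. leq M x y \<or> leq M y x"
    by auto
  then obtain x y where "C = {x, y}" "x \<noteq> y" by (meson card_2_iff)
  with C have "x \<in> maximal_worlds M" "y \<in> maximal_worlds M" "leq M x y \<or> leq M y x" by auto
  with \<open>x \<noteq> y\<close> show False unfolding maximal_worlds_def by blast
qed

definition LTL_satisfiable :: "'w itself \<Rightarrow> fm set \<Rightarrow> bool" where
  "LTL_satisfiable T \<Gamma> \<longleftrightarrow> (\<exists>M :: 'w kmodel. model M \<and> persistent M \<and> depth_le M 1
     \<and> (\<exists>w\<in>wor M. \<forall>\<phi>\<in>\<Gamma>. sat M w \<phi>))"

lemma consistent_imp_LTL_satisfiable: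
  fixes T :: "'w itself"
  assumes "consistent T X \<Gamma>"
  shows "LTL_satisfiable T \<Gamma>"
proof -
  obtain M :: "'w kmodel" and w where w: "w \<in> wor M" "\<forall>\<phi>\<in>\<Gamma>. sat M w \<phi>"
    and M: "model M" "persistent M" "depth_le M (depth_of T X)"
    using assms unfolding consistent_def X_model_def by blast
  have "frame M" using M(1) by (simp add: model_def)
  obtain v where v: "v \<in> maximal_worlds M" "leq M w v"
    using depth_le_ex_maximal_above[OF \<open>frame M\<close> M(3) w(1)] by blast
  have closed: "upward_suc_closed M (maximal_worlds M)"
    using M(2) by (rule maximal_worlds_upward_suc_closed)
  then have "maximal_worlds M \<subseteq> wor M" "\<forall>v\<in>maximal_worlds M. suc M v \<in> maximal_worlds M"
    by (simp_all add: upward_suc_closed_def)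
  with v(1) have "model (M\<lparr>wor := maximal_worlds M\<rparr>)"
    using model_restrict[OF M(1)] by blast
  moreover have "persistent (M\<lparr>wor := maximal_worlds M\<rparr>)"
    using persistent_restrict[OF M(2) closed] v(1) by blast
  moreover have "\<forall>\<phi>\<in>\<Gamma>. sat (M\<lparr>wor := maximal_worlds M\<rparr>) v \<phi>"
    using w sat_mono[OF M(1) w(1) _ v(2)] v(1) \<open>maximal_worlds M \<subseteq> wor M\<close>
      sat_restrict_upward_suc_closed[OF closed v(1)] by blast
  ultimately show ?thesis
    unfolding LTL_satisfiable_def using depth_le_one_maximal_worlds v(1) by fastforce
qed

lemma LTL_satisfiable_imp_consistent:
  fixes T :: "'w itself"
  assumes "intermediate_logic T X" "LTL_satisfiable T \<Gamma>"
  shows "consistent T X \<Gamma>"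
proof -
  obtain M :: "'w kmodel" and w where M: "model M" "persistent M" "depth_le M 1"
    and w: "w \<in> wor M" "\<forall>\<phi>\<in>\<Gamma>. sat M w \<phi>"
    using assms(2) unfolding LTL_satisfiable_def by blast
  have "\<exists>n. n \<ge> 1 \<and> ITL_BD T n \<subseteq> X"
    using assms(1) unfolding intermediate_logic_def by blast
  then have "depth_of T X \<ge> 1"
    unfolding depth_of_def by (rule LeastI2_ex) simp
  with M(3) have "depth_le M (depth_of T X)" by (rule depth_le_mono)
  moreover have "X \<subseteq> ITL_BD T 1"
    using assms(1) unfolding intermediate_logic_def LTL_def by blast
  then have "\<forall>\<phi>\<in>X. \<forall>v\<in>wor M. sat M v \<phi>"
    using M unfolding ITL_BD_def by blast
  ultimately show ?thesis
    using M w unfolding consistent_def X_model_def by blast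
qed

lemma consistent_iff_LTL_satisfiable:
  fixes T :: "'w itself"
  assumes "intermediate_logic T X"
  shows "consistent T X \<Gamma> \<longleftrightarrow> LTL_satisfiable T \<Gamma>"
  using assms consistent_imp_LTL_satisfiable LTL_satisfiable_imp_consistent by blast

theorem proposition4p9:
  fixes T :: "'w itself" and X Y \<Gamma> :: "fm set"
  assumes "intermediate_logic T X" and "intermediate_logic T Y" and "X \<subseteq> Y"
  shows "consistent T X \<Gamma> \<longleftrightarrow> consistent T Y \<Gamma>"
  using consistent_iff_LTL_satisfiable[OF assms(1)] consistent_iff_LTL_satisfiable[OF assms(2)]
  by simp

end
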